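(* Let $(\gamma_{n})_{n\in\mathbb{N}}$ be nonnegative integrable functions on $[0,\infty)$ with $\rho:=\sup_{n\in\mathbb{N}}\int_{0}^{\infty}\gamma_{n}(t)dt<1$, let $a(t)>0$ with $a(t)/t\to0$, and let $G_{n}(t,\theta,M)$, $C_{n}^{1}(s,M)$, $C_{n}^{2}(s,M)$ be as defined in the context. Fix $\theta\in\mathbb{R}$ and let $k_{1}\ge\frac{1}{1-\rho}$ be a constant such that for all sufficiently large $t$, $|G_{n}(s,\frac{a(t)}{t}\theta,M)|\le k_{1}\frac{a(t)}{t}|\theta|$ uniformly in $1\le n\le M$, $M\in\mathbb{N}$, $s\ge0$. Let $$k_{2}:=\frac{4\left[\frac{\rho}{2(1-\rho)^{3}}\left[k_{1}+\frac{1}{1-\rho}\right]+\rho k_{1}^{3}\right]}{(4-\rho)(1-\rho)}.$$ Then for all sufficiently large $t$ such that $k_{1}\frac{a(t)}{t}|\theta|\le\frac{1-\rho}{4}$, $$\left|G_{n}\left(s,\tfrac{a(t)}{t}\theta,M\right)-C_{n}^{1}(s,M)\tfrac{a(t)}{t}\theta-C_{n}^{2}(s,M)\left(\tfrac{a(t)}{t}\theta\right)^{2}\right|\le k_{2}\left[\tfrac{a(t)}{t}|\theta|\right]^{3},$$ uniformly in $1\le n\le M$, $M\in\mathbb{N}$, $s\ge0$.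
   Context: For $M\in\mathbb{N}$, $\theta\in\mathbb{R}$, $t\ge0$: $G_{M}(t,\theta,M)=\theta$ and for $0\le n\le M-1$, $G_{n}(t,\theta,M)=\theta+\int_{0}^{t}(e^{G_{n+1}(t-s,\theta,M)}-1)\gamma_{n}(s)ds$. Also $C_{M}^{1}(s,M)=1$, $C_{M}^{2}(s,M)=0$, and for $1\le n<M$: $C_{n}^{1}(s,M)=1+\int_{0}^{s}C_{n+1}^{1}(s-r,M)\gamma_{n}(r)dr$, $C_{n}^{2}(s,M)=\int_{0}^{s}\left(C_{n+1}^{2}(s-r,M)+\frac12[C_{n+1}^{1}(s-r,M)]^{2}\right)\gamma_{n}(r)dr$. *)

theory Defs
  imports "HOL-Analysis.Analysis"
begin

text \<open>Backward recursion in k = M - n. Gaux g M k t th is G_{M-k}(t,th,M).\<close>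
fun Gaux :: "(nat \<Rightarrow> real \<Rightarrow> real) \<Rightarrow> nat \<Rightarrow> nat \<Rightarrow> real \<Rightarrow> real \<Rightarrow> real" where
  "Gaux g M 0 t th = th"
| "Gaux g M (Suc k) t th =
     th + integral {0..t} (\<lambda>s. (exp (Gaux g M k (t - s) th) - 1) * g (M - Suc k) s)"

text \<open>G g n t th M = G_n(t,th,M) for n \<le> M (value for n > M is irrelevant).\<close>
definition G :: "(nat \<Rightarrow> real \<Rightarrow> real) \<Rightarrow> nat \<Rightarrow> real \<Rightarrow> real \<Rightarrow> nat \<Rightarrow> real" where
  "G g n t th M = Gaux g M (M - n) t th"

fun C1aux :: "(nat \<Rightarrow> real \<Rightarrow> real) \<Rightarrow> nat \<Rightarrow> nat \<Rightarrow> real \<Rightarrow> real" where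
  "C1aux g M 0 s = 1"
| "C1aux g M (Suc k) s = 1 + integral {0..s} (\<lambda>r. C1aux g M k (s - r) * g (M - Suc k) r)"

fun C2aux :: "(nat \<Rightarrow> real \<Rightarrow> real) \<Rightarrow> nat \<Rightarrow> nat \<Rightarrow> real \<Rightarrow> real" where
  "C2aux g M 0 s = 0"
| "C2aux g M (Suc k) s = integral {0..s}
     (\<lambda>r. (C2aux g M k (s - r) + (1/2) * (C1aux g M k (s - r))^2) * g (M - Suc k) r)"

definition C1 :: "(nat \<Rightarrow> real \<Rightarrow> real) \<Rightarrow> nat \<Rightarrow> real \<Rightarrow> nat \<Rightarrow> real" where
  "C1 g n s M = C1aux g M (M - n) s"

definition C2 :: "(nat \<Rightarrow> real \<Rightarrow> real) \<Rightarrow> nat \<Rightarrow> real \<Rightarrow> nat \<Rightarrow> real" where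
  "C2 g n s M = C2aux g M (M - n) s"

end

theory Submission
  imports Defs
begin

text \<open>Write \<open>x = a(t)/t \<cdot> \<theta>\<close> and let \<open>E\<^sub>n\<close> be the second-order error
  \<open>G\<^sub>n - C\<^sup>1\<^sub>n x - C\<^sup>2\<^sub>n x\<^sup>2\<close>. Subtracting the recursions, \<open>E\<^sub>n(s)\<close> is the convolution of
  \<open>\<gamma>\<^sub>n\<close> with \<open>e\<^sup>G\<^sup>' - 1 - C\<^sup>1\<^sup>' x - (C\<^sup>2\<^sup>' + (C\<^sup>1\<^sup>')\<^sup>2/2) x\<^sup>2\<close>, primes denoting level \<open>n+1\<close>.
  By Taylor's formula for \<open>exp\<close>, the a priori bound \<open>|G| \<le> k\<^sub>1|x|\<close> and the bounds
  \<open>1 \<le> C\<^sup>1 \<le> 1/(1-\<rho>)\<close>, \<open>0 \<le> C\<^sup>2 \<le> \<rho>/(2(1-\<rho>)\<^sup>3)\<close>, that integrand is at most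
  \<open>|E\<^sub>n\<^sub>+\<^sub>1|(1 + (1-\<rho>)/4) + D|x|\<^sup>3\<close> for an explicit constant \<open>D\<close>. Since \<open>\<integral>\<gamma>\<^sub>n \<le> \<rho>\<close>, the
  bound \<open>|E| \<le> k\<^sub>2|x|\<^sup>3\<close> propagates from level \<open>M\<close> (where \<open>E = 0\<close>) down to level 1,
  \<open>k\<^sub>2\<close> being chosen so that \<open>\<rho>(k\<^sub>2(1 + (1-\<rho>)/4) + D) \<le> k\<^sub>2\<close>. All convolutions exist
  because the integrands are monotone in time.\<close>

lemma nonneg_integrable_on_Icc:
  fixes \<gamma> :: "real \<Rightarrow> real"
  assumes "\<gamma> integrable_on {0..}" "\<And>t. 0 \<le> t \<Longrightarrow> 0 \<le> \<gamma> t"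
  shows "\<gamma> integrable_on {0..s}" "\<gamma> absolutely_integrable_on {0..s}"
    "integral {0..s} \<gamma> \<le> integral {0..} \<gamma>"
proof -
  show int: "\<gamma> integrable_on {0..s}"
    by (rule integrable_on_subinterval[OF assms(1)]) auto
  show "\<gamma> absolutely_integrable_on {0..s}"
    by (rule nonnegative_absolutely_integrable_1[OF int]) (use assms in auto)
  show "integral {0..s} \<gamma> \<le> integral {0..} \<gamma>"
    by (rule integral_subset_le[OF _ int assms(1)]) (use assms in auto)
qed

lemma convolution_integrable_on_mono:
  fixes f \<gamma> :: "real \<Rightarrow> real"
  assumes mono: "mono_on {0..} f" and \<gamma>: "\<gamma> integrable_on {0..}" "\<And>t. 0 \<le> t \<Longrightarrow> 0 \<le> \<gamma> t"
    and s: "0 \<le> s"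
  shows "(\<lambda>r. f (s - r) * \<gamma> r) integrable_on {0..s}"
proof -
  \<comment> \<open>clamping the argument to \<open>[0,s]\<close> gives a function of \<open>r\<close> that is antitone on all of \<open>\<real>\<close>,
    hence Borel measurable\<close>
  define h where "h r = f (s - max 0 (min s r))" for r
  have "mono (\<lambda>r. - h r)"
  proof (rule monoI)
    fix r r' :: real assume "r \<le> r'"
    hence "f (s - max 0 (min s r')) \<le> f (s - max 0 (min s r))"
      using s by (intro mono_onD[OF mono]) auto
    thus "- h r \<le> - h r'" by (simp add: h_def)
  qed
  hence "(\<lambda>r. - (- h r)) \<in> borel_measurable borel" by (intro borel_measurable_uminus borel_measurable_mono)
  hence h_meas: "h \<in> borel_measurable (lebesgue_on {0..s})"
    by (simp add: measurable_completion measurable_restrict_space1)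
  have "bounded (h ` {0..s})"
  proof (rule boundedI)
    fix y assume "y \<in> h ` {0..s}"
    then obtain r where r: "r \<in> {0..s}" "y = h r" by auto
    have "f 0 \<le> h r" "h r \<le> f s" unfolding h_def
      using s r by (auto intro!: mono_onD[OF mono])
    thus "norm y \<le> \<bar>f 0\<bar> + \<bar>f s\<bar>" using r by auto
  qed
  hence "(\<lambda>r. h r * \<gamma> r) absolutely_integrable_on {0..s}"
    using absolutely_integrable_bounded_measurable_product_real[OF h_meas _ _ nonneg_integrable_on_Icc(2)[OF \<gamma>]]
    by auto
  hence "(\<lambda>r. h r * \<gamma> r) integrable_on {0..s}" by (rule set_lebesgue_integral_eq_integral(1))
  thus ?thesis by (rule integrable_eq) (auto simp: h_def)
qed

lemma convolution_integrable_on_antimono: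
  fixes f \<gamma> :: "real \<Rightarrow> real"
  assumes "antimono_on {0..} f" and "\<gamma> integrable_on {0..}" "\<And>t. 0 \<le> t \<Longrightarrow> 0 \<le> \<gamma> t"
    and "0 \<le> s"
  shows "(\<lambda>r. f (s - r) * \<gamma> r) integrable_on {0..s}"
proof -
  have "mono_on {0..} (\<lambda>u. - f u)"
    by (rule mono_onI) (simp add: monotone_onD[OF assms(1)])
  from integrable_neg[OF convolution_integrable_on_mono[OF this assms(2-4)]]
  show ?thesis by simp
qed

lemma convolution_nonneg:
  fixes F \<gamma> :: "real \<Rightarrow> real"
  assumes "mono_on {0..} F" "\<And>u. 0 \<le> u \<Longrightarrow> 0 \<le> F u"
    and "\<gamma> integrable_on {0..}" "\<And>t. 0 \<le> t \<Longrightarrow> 0 \<le> \<gamma> t" and "0 \<le> s"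
  shows "0 \<le> integral {0..s} (\<lambda>r. F (s - r) * \<gamma> r)"
  by (rule integral_nonneg[OF convolution_integrable_on_mono[OF assms(1,3-5)]]) (auto simp: assms)

lemma mono_on_convolution:
  fixes F \<gamma> :: "real \<Rightarrow> real"
  assumes mono: "mono_on {0..} F" and F_nonneg: "\<And>u. 0 \<le> u \<Longrightarrow> 0 \<le> F u"
    and \<gamma>: "\<gamma> integrable_on {0..}" "\<And>t. 0 \<le> t \<Longrightarrow> 0 \<le> \<gamma> t"
  shows "mono_on {0..} (\<lambda>s. integral {0..s} (\<lambda>r. F (s - r) * \<gamma> r))"
proof (rule mono_onI)
  fix s s' :: real assume ss: "s \<in> {0..}" "s' \<in> {0..}" "s \<le> s'"
  have int_s: "(\<lambda>r. F (s - r) * \<gamma> r) integrable_on {0..s}"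
    and int_s': "(\<lambda>r. F (s' - r) * \<gamma> r) integrable_on {0..s'}"
    using convolution_integrable_on_mono[OF mono \<gamma>] ss by auto
  have int_s's: "(\<lambda>r. F (s' - r) * \<gamma> r) integrable_on {0..s}"
    by (rule integrable_on_subinterval[OF int_s']) (use ss in auto)
  have "integral {0..s} (\<lambda>r. F (s - r) * \<gamma> r) \<le> integral {0..s} (\<lambda>r. F (s' - r) * \<gamma> r)"
    by (rule integral_le[OF int_s int_s's])
      (use ss in \<open>auto intro!: mult_right_mono mono_onD[OF mono] simp: \<gamma>\<close>)
  also have "\<dots> \<le> integral {0..s'} (\<lambda>r. F (s' - r) * \<gamma> r)"
    by (rule integral_subset_le[OF _ int_s's int_s']) (use ss in \<open>auto simp: F_nonneg \<gamma>\<close>)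
  finally show "integral {0..s} (\<lambda>r. F (s - r) * \<gamma> r) \<le> integral {0..s'} (\<lambda>r. F (s' - r) * \<gamma> r)" .
qed

lemma abs_convolution_le:
  fixes F \<gamma> :: "real \<Rightarrow> real"
  assumes F_bound: "\<And>u. 0 \<le> u \<Longrightarrow> u \<le> s \<Longrightarrow> \<bar>F u\<bar> \<le> B"
    and \<gamma>: "\<gamma> integrable_on {0..}" "\<And>t. 0 \<le> t \<Longrightarrow> 0 \<le> \<gamma> t" "integral {0..} \<gamma> \<le> R"
    and "0 \<le> B"
  shows "\<bar>integral {0..s} (\<lambda>r. F (s - r) * \<gamma> r)\<bar> \<le> B * R"
proof (cases "(\<lambda>r. F (s - r) * \<gamma> r) integrable_on {0..s}")
  case True
  have "\<bar>F (s - r)\<bar> * \<bar>\<gamma> r\<bar> \<le> B * \<gamma> r" if "r \<in> {0..s}" for r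
    using that by (simp add: \<gamma>(2)) (rule mult_right_mono, auto simp: F_bound \<gamma>(2))
  hence "\<bar>integral {0..s} (\<lambda>r. F (s - r) * \<gamma> r)\<bar> \<le> integral {0..s} (\<lambda>r. B * \<gamma> r)"
    using integral_norm_bound_integral[OF True integrable_cmul[OF nonneg_integrable_on_Icc(1)[OF \<gamma>(1,2)]]]
    by (simp add: abs_mult)
  also have "\<dots> \<le> B * R"
    using nonneg_integrable_on_Icc(3)[OF \<gamma>(1,2), of s] \<gamma>(3) \<open>0 \<le> B\<close> by (auto intro!: mult_left_mono)
  finally show ?thesis .
next
  case False
  have "0 \<le> integral {0..} \<gamma>" by (rule integral_nonneg[OF \<gamma>(1)]) (use \<gamma>(2) in auto)
  with False \<gamma>(3) \<open>0 \<le> B\<close> show ?thesis by (simp add: not_integrable_integral)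
qed

lemma abs_exp_minus_taylor2_le:
  fixes y :: real
  assumes "\<bar>y\<bar> \<le> 1"
  shows "\<bar>exp y - 1 - y - y^2/2\<bar> \<le> \<bar>y\<bar>^3"
proof -
  obtain t where t: "\<bar>t\<bar> \<le> \<bar>y\<bar>" "exp y = (\<Sum>m<3. y ^ m / fact m) + exp t / fact 3 * y ^ 3"
    using Maclaurin_exp_le[of y 3] by blast
  have "(\<Sum>m<3. y ^ m / fact m) = 1 + y + y^2/2"
    by (simp add: numeral_3_eq_3 fact_numeral power2_eq_square)
  hence "\<bar>exp y - 1 - y - y^2/2\<bar> = exp t / 6 * \<bar>y\<bar>^3"
    using t by (simp add: fact_numeral abs_mult power_abs)
  also have "\<dots> \<le> 1 * \<bar>y\<bar>^3"
  proof (rule mult_right_mono)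
    have "exp t \<le> exp 1" using t assms by simp
    thus "exp t / 6 \<le> 1" using exp_le by linarith
  qed simp
  finally show ?thesis by simp
qed

lemma mono_on_add_half_square:
  fixes f h :: "real \<Rightarrow> real"
  assumes "mono_on A h" "mono_on A f" "\<And>u. u \<in> A \<Longrightarrow> 0 \<le> f u"
  shows "mono_on A (\<lambda>u. h u + 1/2 * (f u)^2)"
proof (rule mono_onI)
  fix r s assume rs: "r \<in> A" "s \<in> A" "r \<le> s"
  have "(f r)^2 \<le> (f s)^2"
    using rs assms(3) by (intro power_mono mono_onD[OF assms(2)]) auto
  with mono_onD[OF assms(1) rs] show "h r + 1/2 * (f r)^2 \<le> h s + 1/2 * (f s)^2" by simp
qed

lemma exp_second_order_error_le:
  fixes y x c1 c2 C cm K1 K2 \<delta> :: real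
  assumes y: "\<bar>y\<bar> \<le> K1 * \<bar>x\<bar>" and small: "K1 * \<bar>x\<bar> \<le> \<delta>" "\<delta> \<le> 1"
    and c1: "0 \<le> c1" "c1 \<le> C" "C \<le> K1" and c2: "0 \<le> c2" "c2 \<le> cm"
    and err: "\<bar>y - c1 * x - c2 * x^2\<bar> \<le> K2 * \<bar>x\<bar>^3" and K2: "0 \<le> K2"
  shows "\<bar>exp y - 1 - c1 * x - (c2 + 1/2 * c1^2) * x^2\<bar>
    \<le> K2 * \<bar>x\<bar>^3 * (1 + \<delta>) + (K1^3 + 1/2 * cm * (K1 + C)) * \<bar>x\<bar>^3"
proof -
  define e where "e = y - c1 * x - c2 * x^2"
  have split: "exp y - 1 - c1 * x - (c2 + 1/2 * c1^2) * x^2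
      = (exp y - 1 - y - y^2/2) + e + 1/2 * ((e + c2 * x^2) * (y + c1 * x))"
    unfolding e_def by (simp add: algebra_simps power2_eq_square)
  have taylor: "\<bar>exp y - 1 - y - y^2/2\<bar> \<le> K1^3 * \<bar>x\<bar>^3"
  proof -
    have "\<bar>y\<bar>^3 \<le> (K1 * \<bar>x\<bar>)^3" by (rule power_mono[OF y]) simp
    with abs_exp_minus_taylor2_le[of y] y small show ?thesis by (simp add: power_mult_distrib)
  qed
  have factor1: "\<bar>e + c2 * x^2\<bar> \<le> K2 * \<bar>x\<bar>^3 + cm * \<bar>x\<bar>^2"
    using err c2 abs_triangle_ineq[of e "c2 * x^2"] mult_right_mono[OF c2(2), of "x^2"]
    unfolding e_def by simp
  have factor2: "\<bar>y + c1 * x\<bar> \<le> (K1 + C) * \<bar>x\<bar>"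
    using y abs_triangle_ineq[of y "c1 * x"] mult_right_mono[OF c1(2), of "\<bar>x\<bar>"] c1(1)
    by (simp add: abs_mult distrib_right)
  have "1/2 * \<bar>(e + c2 * x^2) * (y + c1 * x)\<bar> \<le> 1/2 * ((K2 * \<bar>x\<bar>^3 + cm * \<bar>x\<bar>^2) * ((K1 + C) * \<bar>x\<bar>))"
    unfolding abs_mult using K2 c2 by (intro mult_left_mono mult_mono factor1 factor2) auto
  also have "\<dots> = K2 * \<bar>x\<bar>^3 * (1/2 * (K1 + C) * \<bar>x\<bar>) + 1/2 * cm * (K1 + C) * \<bar>x\<bar>^3"
    by (simp add: field_simps power2_eq_square power3_eq_cube)
  also have "\<dots> \<le> K2 * \<bar>x\<bar>^3 * \<delta> + 1/2 * cm * (K1 + C) * \<bar>x\<bar>^3"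
  proof -
    have "1/2 * (K1 + C) * \<bar>x\<bar> \<le> K1 * \<bar>x\<bar>" using c1 by (intro mult_right_mono) auto
    with small have "1/2 * (K1 + C) * \<bar>x\<bar> \<le> \<delta>" by linarith
    moreover have "0 \<le> K2 * \<bar>x\<bar>^3" using K2 by simp
    ultimately show ?thesis by (rule add_right_mono[OF mult_left_mono])
  qed
  finally have product: "1/2 * \<bar>(e + c2 * x^2) * (y + c1 * x)\<bar>
      \<le> K2 * \<bar>x\<bar>^3 * \<delta> + 1/2 * cm * (K1 + C) * \<bar>x\<bar>^3" .
  have "\<bar>e\<bar> \<le> K2 * \<bar>x\<bar>^3" using err by (simp add: e_def)
  have "\<bar>exp y - 1 - c1 * x - (c2 + 1/2 * c1^2) * x^2\<bar>
      \<le> \<bar>exp y - 1 - y - y^2/2\<bar> + \<bar>e\<bar> + 1/2 * \<bar>(e + c2 * x^2) * (y + c1 * x)\<bar>"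
    unfolding split
    using abs_triangle_ineq[of "exp y - 1 - y - y^2/2 + e" "1/2 * ((e + c2 * x^2) * (y + c1 * x))"]
      abs_triangle_ineq[of "exp y - 1 - y - y^2/2" e] abs_mult[of "1/2" "(e + c2 * x^2) * (y + c1 * x)"]
    by simp
  also have "\<dots> \<le> K1^3 * \<bar>x\<bar>^3 + K2 * \<bar>x\<bar>^3 + (K2 * \<bar>x\<bar>^3 * \<delta> + 1/2 * cm * (K1 + C) * \<bar>x\<bar>^3)"
    using taylor \<open>\<bar>e\<bar> \<le> K2 * \<bar>x\<bar>^3\<close> product by linarith
  also have "\<dots> = K2 * \<bar>x\<bar>^3 * (1 + \<delta>) + (K1^3 + 1/2 * cm * (K1 + C)) * \<bar>x\<bar>^3"
    by (simp add: algebra_simps)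
  finally show ?thesis .
qed

lemma k2_post_fixed_point:
  fixes R K1 K2 :: real
  assumes R: "0 \<le> R" "R < 1" and "0 \<le> K1"
    and K2: "K2 = 4 * (R / (2 * (1 - R)^3) * (K1 + 1 / (1 - R)) + R * K1^3) / ((4 - R) * (1 - R))"
  shows "R * (K2 * (1 + (1 - R)/4) + (K1^3 + 1/2 * (R / (2 * (1 - R)^3)) * (K1 + 1 / (1 - R)))) \<le> K2"
proof -
  define cL where "cL = R / (2 * (1 - R)^3) * (K1 + 1 / (1 - R))"
  have "0 \<le> cL" unfolding cL_def using R \<open>0 \<le> K1\<close> by simp
  have "(4 - R) * (1 - R) \<noteq> 0" using R by simp
  then have K2_scaled: "K2 * ((4 - R) * (1 - R) / 4) = cL + R * K1^3"
    unfolding K2 cL_def[symmetric] by simp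
  have "K2 - R * (K2 * (1 + (1 - R)/4)) = K2 * ((4 - R) * (1 - R) / 4)"
    by (simp add: field_simps)
  moreover have "R * (K2 * (1 + (1 - R)/4) + (K1^3 + 1/2 * (R / (2 * (1 - R)^3)) * (K1 + 1 / (1 - R))))
      = R * (K2 * (1 + (1 - R)/4)) + R * K1^3 + R * cL / 2"
    unfolding cL_def by (simp add: algebra_simps)
  moreover have "R * cL \<le> 2 * cL" using R \<open>0 \<le> cL\<close> by (intro mult_right_mono) auto
  ultimately show ?thesis using K2_scaled by linarith
qed

context
  fixes g :: "nat \<Rightarrow> real \<Rightarrow> real" and R :: real
  assumes g_nonneg: "\<And>n t. 0 \<le> t \<Longrightarrow> 0 \<le> g n t"
    and g_integrable: "\<And>n. g n integrable_on {0..}"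
    and g_integral_le: "\<And>n. integral {0..} (g n) \<le> R"
    and R_less_1: "R < 1"
begin

lemma R_nonneg: "0 \<le> R"
proof -
  have "0 \<le> integral {0..} (g 0)"
    by (rule integral_nonneg[OF g_integrable]) (use g_nonneg in auto)
  with g_integral_le[of 0] show ?thesis by linarith
qed

lemma C1aux_mono_bounded:
  "mono_on {0..} (C1aux g M k) \<and> (\<forall>s\<ge>0. 1 \<le> C1aux g M k s \<and> C1aux g M k s \<le> 1 / (1 - R))"
proof (induction k)
  case 0
  have "1 \<le> 1 / (1 - R)" using R_nonneg R_less_1 by simp
  then show ?case by (simp add: mono_on_def)
next
  case (Suc k)
  let ?F = "C1aux g M k" and ?n = "M - Suc k"
  have mono: "mono_on {0..} ?F" and bounds: "\<And>u. 0 \<le> u \<Longrightarrow> 1 \<le> ?F u \<and> ?F u \<le> 1 / (1 - R)"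
    using Suc.IH by auto
  have nonneg: "\<And>u. 0 \<le> u \<Longrightarrow> 0 \<le> ?F u" using bounds by fastforce
  have "mono_on {0..} (C1aux g M (Suc k))"
    using mono_on_convolution[OF mono nonneg g_integrable[of ?n] g_nonneg]
    by (auto simp: mono_on_def)
  moreover have "1 \<le> C1aux g M (Suc k) s \<and> C1aux g M (Suc k) s \<le> 1 / (1 - R)" if "0 \<le> s" for s
  proof -
    have "\<bar>integral {0..s} (\<lambda>r. ?F (s - r) * g ?n r)\<bar> \<le> 1 / (1 - R) * R"
    proof (rule abs_convolution_le[OF _ g_integrable g_nonneg g_integral_le])
      fix u :: real assume "0 \<le> u" "u \<le> s"
      with bounds[of u] show "\<bar>?F u\<bar> \<le> 1 / (1 - R)" by simp
    qed (use R_less_1 in auto)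
    moreover have "1 + 1 / (1 - R) * R = 1 / (1 - R)" using R_less_1 by (simp add: field_simps)
    ultimately show ?thesis
      using convolution_nonneg[OF mono nonneg g_integrable[of ?n] g_nonneg that] by simp
  qed
  ultimately show ?case by blast
qed

lemma C2aux_mono_bounded:
  "mono_on {0..} (C2aux g M k) \<and> (\<forall>s\<ge>0. 0 \<le> C2aux g M k s \<and> C2aux g M k s \<le> R / (2 * (1 - R)^3))"
proof (induction k)
  case 0
  then show ?case using R_nonneg R_less_1 by (simp add: mono_on_def)
next
  case (Suc k)
  let ?F = "\<lambda>u. C2aux g M k u + 1/2 * (C1aux g M k u)^2" and ?n = "M - Suc k"
  have C1: "mono_on {0..} (C1aux g M k)" "\<And>u. 0 \<le> u \<Longrightarrow> 1 \<le> C1aux g M k u \<and> C1aux g M k u \<le> 1 / (1 - R)"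
    using C1aux_mono_bounded by auto
  have C2: "mono_on {0..} (C2aux g M k)" "\<And>u. 0 \<le> u \<Longrightarrow> 0 \<le> C2aux g M k u \<and> C2aux g M k u \<le> R / (2 * (1 - R)^3)"
    using Suc.IH by auto
  have mono: "mono_on {0..} ?F"
    by (rule mono_on_add_half_square[OF C2(1) C1(1)]) (use C1(2) in fastforce)
  have nonneg: "\<And>u. 0 \<le> u \<Longrightarrow> 0 \<le> ?F u" using C2(2) by (simp add: add_nonneg_nonneg)
  have "mono_on {0..} (C2aux g M (Suc k))"
    using mono_on_convolution[OF mono nonneg g_integrable[of ?n] g_nonneg]
    by (auto simp: mono_on_def)
  moreover have "0 \<le> C2aux g M (Suc k) s \<and> C2aux g M (Suc k) s \<le> R / (2 * (1 - R)^3)" if "0 \<le> s" for s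
  proof -
    define B where "B = R / (2 * (1 - R)^3) + 1/2 * (1 / (1 - R))^2"
    have F_bound: "\<bar>?F u\<bar> \<le> B" if "0 \<le> u" for u
    proof -
      have "(C1aux g M k u)^2 \<le> (1 / (1 - R))^2" using C1(2)[OF that] by (intro power_mono) auto
      thus ?thesis using C2(2)[OF that] nonneg[OF that] unfolding B_def by simp
    qed
    have "\<bar>integral {0..s} (\<lambda>r. ?F (s - r) * g ?n r)\<bar> \<le> B * R"
      using F_bound[of 0] by (intro abs_convolution_le[OF F_bound g_integrable g_nonneg g_integral_le]) auto
    moreover have "B * R = R / (2 * (1 - R)^3)"
    proof -
      define d where "d = 1 - R"
      have "0 < d" "R = 1 - d" using R_less_1 by (auto simp: d_def)
      then show ?thesis
        unfolding B_def d_def[symmetric] by (simp add: field_simps power3_eq_cube power2_eq_square)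
    qed
    ultimately show ?thesis
      using convolution_nonneg[OF mono nonneg g_integrable[of ?n] g_nonneg that] by simp
  qed
  ultimately show ?case by blast
qed

lemma Gaux_mono_ge:
  assumes "0 \<le> x"
  shows "mono_on {0..} (\<lambda>u. Gaux g M k u x) \<and> (\<forall>u\<ge>0. x \<le> Gaux g M k u x)"
proof (induction k)
  case 0
  then show ?case by (simp add: mono_on_def)
next
  case (Suc k)
  let ?F = "\<lambda>u. exp (Gaux g M k u x) - 1" and ?n = "M - Suc k"
  have mono: "mono_on {0..} ?F" using Suc.IH by (auto simp: mono_on_def)
  have nonneg: "\<And>u. 0 \<le> u \<Longrightarrow> 0 \<le> ?F u" using Suc.IH assms by fastforce
  show ?case
    using mono_on_convolution[OF mono nonneg g_integrable[of ?n] g_nonneg]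
      convolution_nonneg[OF mono nonneg g_integrable[of ?n] g_nonneg]
    by (auto simp: mono_on_def)
qed

lemma Gaux_antimono_le:
  assumes "x \<le> 0"
  shows "antimono_on {0..} (\<lambda>u. Gaux g M k u x) \<and> (\<forall>u\<ge>0. Gaux g M k u x \<le> x)"
proof (induction k)
  case 0
  then show ?case by (simp add: monotone_on_def)
next
  case (Suc k)
  let ?F = "\<lambda>u. 1 - exp (Gaux g M k u x)" and ?n = "M - Suc k"
  have mono: "mono_on {0..} ?F" using Suc.IH by (auto simp: mono_on_def monotone_on_def)
  have nonneg: "\<And>u. 0 \<le> u \<Longrightarrow> 0 \<le> ?F u" using Suc.IH assms by fastforce
  have "integral {0..s} (\<lambda>r. (exp (Gaux g M k (s - r) x) - 1) * g ?n r)
      = - integral {0..s} (\<lambda>r. ?F (s - r) * g ?n r)" for s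
    by (subst integral_neg[symmetric]) (simp add: algebra_simps)
  then show ?case
    using mono_on_convolution[OF mono nonneg g_integrable[of ?n] g_nonneg]
      convolution_nonneg[OF mono nonneg g_integrable[of ?n] g_nonneg]
    by (auto simp: mono_on_def monotone_on_def)
qed

lemma exp_Gaux_convolution_integrable:
  assumes "0 \<le> s"
  shows "(\<lambda>r. (exp (Gaux g M k (s - r) x) - 1) * g n r) integrable_on {0..s}"
proof (cases "0 \<le> x")
  case True
  then have "mono_on {0..} (\<lambda>u. exp (Gaux g M k u x) - 1)"
    using Gaux_mono_ge by (auto simp: mono_on_def)
  from convolution_integrable_on_mono[OF this g_integrable g_nonneg assms] show ?thesis .
next
  case False
  then have "antimono_on {0..} (\<lambda>u. exp (Gaux g M k u x) - 1)"
    using Gaux_antimono_le[of x] by (auto simp: monotone_on_def)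
  from convolution_integrable_on_antimono[OF this g_integrable g_nonneg assms] show ?thesis .
qed

lemma Gaux_Suc_second_order_error:
  assumes "0 \<le> s"
  shows "Gaux g M (Suc k) s x - C1aux g M (Suc k) s * x - C2aux g M (Suc k) s * x^2
    = integral {0..s} (\<lambda>r. (exp (Gaux g M k (s - r) x) - 1 - C1aux g M k (s - r) * x
        - (C2aux g M k (s - r) + 1/2 * (C1aux g M k (s - r))^2) * x^2) * g (M - Suc k) r)"
proof -
  let ?n = "M - Suc k"
  let ?A = "\<lambda>r. (exp (Gaux g M k (s - r) x) - 1) * g ?n r"
  let ?B = "\<lambda>r. C1aux g M k (s - r) * g ?n r"
  let ?C = "\<lambda>r. (C2aux g M k (s - r) + 1/2 * (C1aux g M k (s - r))^2) * g ?n r"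
  have C1_mono: "mono_on {0..} (C1aux g M k)" using C1aux_mono_bounded by blast
  have C2_step_mono: "mono_on {0..} (\<lambda>u. C2aux g M k u + 1/2 * (C1aux g M k u)^2)"
  proof (rule mono_on_add_half_square[OF _ C1_mono])
    show "mono_on {0..} (C2aux g M k)" using C2aux_mono_bounded by blast
    show "\<And>u. u \<in> {0..} \<Longrightarrow> 0 \<le> C1aux g M k u"
      using C1aux_mono_bounded by (metis atLeast_iff order_trans zero_le_one)
  qed
  have int_A: "?A integrable_on {0..s}" by (rule exp_Gaux_convolution_integrable[OF assms])
  have int_B: "?B integrable_on {0..s}"
    by (rule convolution_integrable_on_mono[OF C1_mono g_integrable g_nonneg assms])
  have int_C: "?C integrable_on {0..s}"
    by (rule convolution_integrable_on_mono[OF C2_step_mono g_integrable g_nonneg assms])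
  have "Gaux g M (Suc k) s x - C1aux g M (Suc k) s * x - C2aux g M (Suc k) s * x^2
      = integral {0..s} ?A - x * integral {0..s} ?B - x^2 * integral {0..s} ?C"
    by (simp only: Gaux.simps C1aux.simps C2aux.simps) (simp add: distrib_right)
  also have "\<dots> = integral {0..s} (\<lambda>r. ?A r - x * ?B r - x^2 * ?C r)"
    using int_A int_B int_C by (simp add: integral_diff integrable_diff integrable_on_mult_right)
  also have "\<dots> = integral {0..s} (\<lambda>r. (exp (Gaux g M k (s - r) x) - 1 - C1aux g M k (s - r) * x
        - (C2aux g M k (s - r) + 1/2 * (C1aux g M k (s - r))^2) * x^2) * g ?n r)"
    by (rule integral_cong) (simp add: left_diff_distrib)
  finally show ?thesis .
qed

lemma Gaux_second_order_error_le:
  fixes K1 K2 :: real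
  assumes G_bound: "\<And>k s. k < M \<Longrightarrow> 0 \<le> s \<Longrightarrow> \<bar>Gaux g M k s x\<bar> \<le> K1 * \<bar>x\<bar>"
    and K1: "1 / (1 - R) \<le> K1" and small: "K1 * \<bar>x\<bar> \<le> (1 - R) / 4"
    and K2: "K2 = 4 * (R / (2 * (1 - R)^3) * (K1 + 1 / (1 - R)) + R * K1^3) / ((4 - R) * (1 - R))"
    and "k < M" "0 \<le> s"
  shows "\<bar>Gaux g M k s x - C1aux g M k s * x - C2aux g M k s * x^2\<bar> \<le> K2 * \<bar>x\<bar>^3"
proof -
  have "0 < 1 / (1 - R)" using R_less_1 by simp
  with K1 have "0 \<le> K1" by linarith
  have "0 \<le> K2" unfolding K2 using R_nonneg R_less_1 \<open>0 \<le> K1\<close> by simp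
  define D where "D = K1^3 + 1/2 * (R / (2 * (1 - R)^3)) * (K1 + 1 / (1 - R))"
  from \<open>k < M\<close> \<open>0 \<le> s\<close> show ?thesis
  proof (induction k arbitrary: s)
    case 0
    then show ?case using \<open>0 \<le> K2\<close> by simp
  next
    case (Suc k)
    define I where "I u = exp (Gaux g M k u x) - 1 - C1aux g M k u * x
      - (C2aux g M k u + 1/2 * (C1aux g M k u)^2) * x^2" for u
    have "\<bar>I u\<bar> \<le> K2 * \<bar>x\<bar>^3 * (1 + (1 - R) / 4) + D * \<bar>x\<bar>^3" if "0 \<le> u" for u
    proof -
      have "k < M" using Suc.prems(1) by linarith
      have C1: "0 \<le> C1aux g M k u" "C1aux g M k u \<le> 1 / (1 - R)"
        using C1aux_mono_bounded that by (auto intro: order_trans[OF zero_le_one])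
      have C2: "0 \<le> C2aux g M k u" "C2aux g M k u \<le> R / (2 * (1 - R)^3)"
        using C2aux_mono_bounded that by auto
      have "(1 - R) / 4 \<le> 1" using R_nonneg by simp
      from exp_second_order_error_le[OF G_bound[OF \<open>k < M\<close> that] small this C1 K1 C2
          Suc.IH[OF \<open>k < M\<close> that] \<open>0 \<le> K2\<close>]
      show ?thesis unfolding I_def D_def .
    qed
    then have "\<bar>integral {0..s} (\<lambda>r. I (s - r) * g (M - Suc k) r)\<bar>
        \<le> (K2 * \<bar>x\<bar>^3 * (1 + (1 - R) / 4) + D * \<bar>x\<bar>^3) * R"
      by (intro abs_convolution_le g_integrable g_nonneg g_integral_le)
        (auto intro: order_trans[OF abs_ge_zero])
    also have "\<dots> = \<bar>x\<bar>^3 * (R * (K2 * (1 + (1 - R) / 4) + D))" by (simp add: algebra_simps)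
    also have "\<dots> \<le> \<bar>x\<bar>^3 * K2"
      unfolding D_def by (intro mult_left_mono k2_post_fixed_point[OF R_nonneg R_less_1 \<open>0 \<le> K1\<close> K2]) simp
    finally show ?case
      using Gaux_Suc_second_order_error[OF \<open>0 \<le> s\<close>] by (simp add: I_def mult.commute)
  qed
qed

lemma G_second_order_error_le:
  fixes K1 K2 :: real
  assumes G_bound: "\<And>n s. 1 \<le> n \<Longrightarrow> n \<le> M \<Longrightarrow> 0 \<le> s \<Longrightarrow> \<bar>G g n s x M\<bar> \<le> K1 * \<bar>x\<bar>"
    and K1: "1 / (1 - R) \<le> K1" and small: "K1 * \<bar>x\<bar> \<le> (1 - R) / 4"
    and K2: "K2 = 4 * (R / (2 * (1 - R)^3) * (K1 + 1 / (1 - R)) + R * K1^3) / ((4 - R) * (1 - R))"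
    and "1 \<le> n" "n \<le> M" "0 \<le> s"
  shows "\<bar>G g n s x M - C1 g n s M * x - C2 g n s M * x^2\<bar> \<le> K2 * \<bar>x\<bar>^3"
proof -
  have "\<bar>Gaux g M k u x\<bar> \<le> K1 * \<bar>x\<bar>" if "k < M" "0 \<le> u" for k u
    using G_bound[of "M - k" u] that by (simp add: G_def)
  from Gaux_second_order_error_le[OF this K1 small K2, of "M - n" s] assms(5-7) show ?thesis
    by (simp add: G_def C1_def C2_def)
qed

end

theorem lemma4p9:
  fixes \<gamma> :: "nat \<Rightarrow> real \<Rightarrow> real" and a :: "real \<Rightarrow> real"
    and \<rho> \<theta> k1 k2 :: real
  assumes nonneg: "\<And>n t. t \<ge> 0 \<Longrightarrow> \<gamma> n t \<ge> 0"
    and integ: "\<And>n. \<gamma> n integrable_on {0..}"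
    and bdd: "bdd_above (range (\<lambda>n. integral {0..} (\<gamma> n)))"
    and rho_def: "\<rho> = (SUP n. integral {0..} (\<gamma> n))"
    and rho_lt: "\<rho> < 1"
    and a_pos: "\<And>t. a t > 0"
    and a_lim: "((\<lambda>t. a t / t) \<longlongrightarrow> 0) at_top"
    and k1_ge: "k1 \<ge> 1 / (1 - \<rho>)"
    and k1_bound: "\<exists>T. \<forall>t\<ge>T. \<forall>M n s. 1 \<le> n \<and> n \<le> M \<and> s \<ge> 0 \<longrightarrow>
        \<bar>G \<gamma> n s (a t / t * \<theta>) M\<bar> \<le> k1 * (a t / t) * \<bar>\<theta>\<bar>"
    and k2_def: "k2 = 4 * (\<rho> / (2 * (1 - \<rho>)^3) * (k1 + 1 / (1 - \<rho>)) + \<rho> * k1^3)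
                      / ((4 - \<rho>) * (1 - \<rho>))"
  shows "\<exists>T. \<forall>t\<ge>T. k1 * (a t / t) * \<bar>\<theta>\<bar> \<le> (1 - \<rho>) / 4 \<longrightarrow>
        (\<forall>M n s. 1 \<le> n \<and> n \<le> M \<and> s \<ge> 0 \<longrightarrow>
          \<bar>G \<gamma> n s (a t / t * \<theta>) M - C1 \<gamma> n s M * (a t / t * \<theta>)
             - C2 \<gamma> n s M * (a t / t * \<theta>)^2\<bar> \<le> k2 * ((a t / t) * \<bar>\<theta>\<bar>)^3)"
proof -
  have integral_le_rho: "\<And>n. integral {0..} (\<gamma> n) \<le> \<rho>"
    unfolding rho_def by (rule cSUP_upper[OF _ bdd]) simp
  obtain T where T: "\<forall>t\<ge>T. \<forall>M n s. 1 \<le> n \<and> n \<le> M \<and> s \<ge> 0 \<longrightarrow>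
      \<bar>G \<gamma> n s (a t / t * \<theta>) M\<bar> \<le> k1 * (a t / t) * \<bar>\<theta>\<bar>"
    using k1_bound by blast
  show ?thesis
  proof (intro exI[of _ "max T 1"] allI impI)
    fix t s :: real and M n :: nat
    assume t: "max T 1 \<le> t" and small: "k1 * (a t / t) * \<bar>\<theta>\<bar> \<le> (1 - \<rho>) / 4"
      and nMs: "1 \<le> n \<and> n \<le> M \<and> 0 \<le> s"
    have "0 < a t / t" using t a_pos[of t] by simp
    then have abs_x: "\<bar>a t / t * \<theta>\<bar> = a t / t * \<bar>\<theta>\<bar>" by (simp only: abs_mult abs_of_pos)
    show "\<bar>G \<gamma> n s (a t / t * \<theta>) M - C1 \<gamma> n s M * (a t / t * \<theta>)
        - C2 \<gamma> n s M * (a t / t * \<theta>)^2\<bar> \<le> k2 * ((a t / t) * \<bar>\<theta>\<bar>)^3"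
      using G_second_order_error_le[OF nonneg integ integral_le_rho rho_lt _ k1_ge _ k2_def,
          where M = M and x = "a t / t * \<theta>"]
        T t small nMs
      unfolding abs_x by (auto simp: mult.assoc)
  qed
qed

end
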